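(* Let $A\times_{(\alpha,\beta)}B$ and $A'\times_{(\alpha',\beta')}B'$ be knit products of groups and let $f:A\to A'$, $g:B\to B'$, $\varphi:B\to A'$, $\psi:A\to B'$ be maps such that for all $a,a_1,a_2\in A$ and $b,b_1,b_2\in B$: (f) $\varphi(b_1b_2)=\varphi(b_1)\,\alpha'_{g(b_1)}(\varphi(b_2))$ and $\psi(a_1a_2)=\beta'^{f(a_2)}(\psi(a_1))\,\psi(a_2)$; (g) $f(a_1a_2)=f(a_1)\,\alpha'_{\psi(a_1)}(f(a_2))$ and $g(b_1b_2)=\beta'^{\varphi(b_2)}(g(b_1))\,g(b_2)$; (h) $f(\alpha_{b}(a))\,\alpha'_{\psi(\alpha_{b}(a))}\bigl(\varphi(\beta^{a}(b))\bigr)=\varphi(b)\,\alpha'_{g(b)}(f(a))$ and $\beta'^{\varphi(\beta^{a}(b))}\bigl(\psi(\alpha_{b}(a))\bigr)\,g(\beta^{a}(b))=\beta'^{f(a)}(g(b))\,\psi(a)$. Define $\Phi=(\Phi_1,\Phi_2):A\times_{(\alpha,\beta)}B\to A'\times_{(\alpha',\beta')}B'$ by $$\Phi_1(a,b)=f(a)\,\alpha'_{\psi(a)}(\varphi(b)),\qquad \Phi_2(a,b)=\beta'^{\varphi(b)}(\psi(a))\,g(b).$$ Then $\Phi$ is a group homomorphism. Moreover, if $f$ and $g$ are group homomorphisms, condition (g) may be replaced by: $f(a_2)=\alpha'_{\psi(a_1)}(f(a_2))$ and $g(b_1)=\beta'^{\varphi(b_2)}(g(b_1))$ for all $a_1,a_2\in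 A$, $b_1,b_2\in B$.
   Context: For groups $A$, $B$ (units denoted $e$), an automorphically knitted pair of actions $(\alpha,\beta)$ for $(A,B)$ consists of maps $\alpha:B\times A\to A$ and $\beta:B\times A\to B$, written $\alpha_b(a):=\alpha(b,a)$ and $\beta^a(b):=\beta(b,a)$, such that: (1) each $\alpha_b$ is a bijection of $A$, $\alpha_{b_1}\circ\alpha_{b_2}=\alpha_{b_1b_2}$, $\alpha_e=\mathrm{Id}_A$; (2) each $\beta^a$ is a bijection of $B$, $\beta^{a_1}\circ\beta^{a_2}=\beta^{a_2a_1}$, $\beta^e=\mathrm{Id}_B$; (3) $\alpha_b(a_1a_2)=\alpha_b(a_1)\,\alpha_{\beta^{a_1}(b)}(a_2)$; (4) $\beta^a(b_1b_2)=\beta^{\alpha_{b_2}(a)}(b_1)\,\beta^a(b_2)$. The knit product $A\times_{(\alpha,\beta)}B$ is the group on the set $A\times B$ with multiplication $(a_1,b_1)\cdot(a_2,b_2)=(a_1\alpha_{b_1}(a_2),\ \beta^{a_2}(b_1)b_2)$; likewise $A'\times_{(\alpha',\beta')}B'$ for an automorphically knitted pair $(\alpha',\beta')$ for groups $(A',B')$, with $\alpha'_{b'}(a')=\alpha'(b',a')$, $\beta'^{a'}(b')=\beta'(b',a')$. *)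

theory Defs
  imports "HOL-Algebra.Group"
begin

text \<open>We write \<open>\<alpha> b a\<close> for \<open>\<alpha>_b(a)\<close>
  and \<open>\<beta> b a\<close> for \<open>\<beta>^a(b)\<close>, i.e. both maps take their arguments in the order
  \<open>B \<times> A\<close>, as in the paper.\<close>

definition knitted_pair ::
  "('a, 'm) monoid_scheme \<Rightarrow> ('b, 'n) monoid_scheme \<Rightarrow>
   ('b \<Rightarrow> 'a \<Rightarrow> 'a) \<Rightarrow> ('b \<Rightarrow> 'a \<Rightarrow> 'b) \<Rightarrow> bool" where
  "knitted_pair A B \<alpha> \<beta> \<longleftrightarrow>
     (\<forall>b\<in>carrier B. bij_betw (\<alpha> b) (carrier A) (carrier A)) \<and>
     (\<forall>b1\<in>carrier B. \<forall>b2\<in>carrier B. \<forall>a\<in>carrier A.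
        \<alpha> b1 (\<alpha> b2 a) = \<alpha> (b1 \<otimes>\<^bsub>B\<^esub> b2) a) \<and>
     (\<forall>a\<in>carrier A. \<alpha> \<one>\<^bsub>B\<^esub> a = a) \<and>
     (\<forall>a\<in>carrier A. bij_betw (\<lambda>b. \<beta> b a) (carrier B) (carrier B)) \<and>
     (\<forall>a1\<in>carrier A. \<forall>a2\<in>carrier A. \<forall>b\<in>carrier B.
        \<beta> (\<beta> b a2) a1 = \<beta> b (a2 \<otimes>\<^bsub>A\<^esub> a1)) \<and>
     (\<forall>b\<in>carrier B. \<beta> b \<one>\<^bsub>A\<^esub> = b) \<and>
     (\<forall>b\<in>carrier B. \<forall>a1\<in>carrier A. \<forall>a2\<in>carrier A.
        \<alpha> b (a1 \<otimes>\<^bsub>A\<^esub> a2) = \<alpha> b a1 \<otimes>\<^bsub>A\<^esub> \<alpha> (\<beta> b a1) a2) \<and>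
     (\<forall>a\<in>carrier A. \<forall>b1\<in>carrier B. \<forall>b2\<in>carrier B.
        \<beta> (b1 \<otimes>\<^bsub>B\<^esub> b2) a = \<beta> b1 (\<alpha> b2 a) \<otimes>\<^bsub>B\<^esub> \<beta> b2 a)"

definition knit_prod ::
  "('a, 'm) monoid_scheme \<Rightarrow> ('b, 'n) monoid_scheme \<Rightarrow>
   ('b \<Rightarrow> 'a \<Rightarrow> 'a) \<Rightarrow> ('b \<Rightarrow> 'a \<Rightarrow> 'b) \<Rightarrow> ('a \<times> 'b) monoid" where
  "knit_prod A B \<alpha> \<beta> =
     \<lparr> carrier = carrier A \<times> carrier B,
       mult = (\<lambda>(a1, b1) (a2, b2). (a1 \<otimes>\<^bsub>A\<^esub> \<alpha> b1 a2, \<beta> b1 a2 \<otimes>\<^bsub>B\<^esub> b2)),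
       one = (\<one>\<^bsub>A\<^esub>, \<one>\<^bsub>B\<^esub>) \<rparr>"

end

theory Submission
  imports Defs
begin

text \<open>The map \<open>\<Phi>\<close> factors as \<open>\<Phi>(a, b) = F(a) H(b)\<close> in the target knit product, with
  \<open>F(a) = (f(a), \<psi>(a))\<close> and \<open>H(b) = (\<phi>(b), g(b))\<close>. Conditions (f) and (g) say precisely that
  \<open>F\<close> and \<open>H\<close> are homomorphisms, and (h) is the exchange law
  \<open>F(\<alpha>\<^sub>b(a)) H(\<beta>\<^sup>a(b)) = H(b) F(a)\<close>. Since \<open>(a, b) = (a, e)(e, b)\<close> and
  \<open>(e, b)(a, e) = (\<alpha>\<^sub>b(a), \<beta>\<^sup>a(b))\<close>, these are exactly the relations needed for
  \<open>(a, b) \<mapsto> F(a) H(b)\<close> to be multiplicative on any knit product.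
  If \<open>f\<close> and \<open>g\<close> are homomorphisms, the alternative hypotheses turn (g) into
  \<open>f(a\<^sub>1 a\<^sub>2) = f(a\<^sub>1) f(a\<^sub>2)\<close> and \<open>g(b\<^sub>1 b\<^sub>2) = g(b\<^sub>1) g(b\<^sub>2)\<close>.\<close>

lemma knitted_pair_alpha_closed:
  assumes "knitted_pair A B \<alpha> \<beta>" "b \<in> carrier B" "a \<in> carrier A"
  shows "\<alpha> b a \<in> carrier A"
  using assms unfolding knitted_pair_def by (meson bij_betw_apply)

lemma knitted_pair_beta_closed:
  assumes "knitted_pair A B \<alpha> \<beta>" "b \<in> carrier B" "a \<in> carrier A"
  shows "\<beta> b a \<in> carrier B"
  using assms unfolding knitted_pair_def by (meson bij_betw_apply)

lemma knitted_pair_alpha_comp: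
  assumes "knitted_pair A B \<alpha> \<beta>" "b1 \<in> carrier B" "b2 \<in> carrier B" "a \<in> carrier A"
  shows "\<alpha> b1 (\<alpha> b2 a) = \<alpha> (b1 \<otimes>\<^bsub>B\<^esub> b2) a"
  using assms unfolding knitted_pair_def by blast

lemma knitted_pair_beta_comp:
  assumes "knitted_pair A B \<alpha> \<beta>" "a1 \<in> carrier A" "a2 \<in> carrier A" "b \<in> carrier B"
  shows "\<beta> (\<beta> b a2) a1 = \<beta> b (a2 \<otimes>\<^bsub>A\<^esub> a1)"
  using assms unfolding knitted_pair_def by blast

lemma knitted_pair_alpha_unit:
  assumes "knitted_pair A B \<alpha> \<beta>" "a \<in> carrier A"
  shows "\<alpha> \<one>\<^bsub>B\<^esub> a = a"
  using assms unfolding knitted_pair_def by blast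

lemma knitted_pair_beta_unit:
  assumes "knitted_pair A B \<alpha> \<beta>" "b \<in> carrier B"
  shows "\<beta> b \<one>\<^bsub>A\<^esub> = b"
  using assms unfolding knitted_pair_def by blast

lemma knitted_pair_alpha_mult:
  assumes "knitted_pair A B \<alpha> \<beta>" "b \<in> carrier B" "a1 \<in> carrier A" "a2 \<in> carrier A"
  shows "\<alpha> b (a1 \<otimes>\<^bsub>A\<^esub> a2) = \<alpha> b a1 \<otimes>\<^bsub>A\<^esub> \<alpha> (\<beta> b a1) a2"
  using assms unfolding knitted_pair_def by blast

lemma knitted_pair_beta_mult:
  assumes "knitted_pair A B \<alpha> \<beta>" "a \<in> carrier A" "b1 \<in> carrier B" "b2 \<in> carrier B"
  shows "\<beta> (b1 \<otimes>\<^bsub>B\<^esub> b2) a = \<beta> b1 (\<alpha> b2 a) \<otimes>\<^bsub>B\<^esub> \<beta> b2 a"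
  using assms unfolding knitted_pair_def by blast

lemma knitted_pair_alpha_one:
  assumes "group A" "knitted_pair A B \<alpha> \<beta>" "b \<in> carrier B"
  shows "\<alpha> b \<one>\<^bsub>A\<^esub> = \<one>\<^bsub>A\<^esub>"
proof -
  interpret A: group A by fact
  have "\<alpha> b \<one>\<^bsub>A\<^esub> \<otimes>\<^bsub>A\<^esub> \<alpha> b \<one>\<^bsub>A\<^esub> = \<alpha> b \<one>\<^bsub>A\<^esub>"
    using knitted_pair_alpha_mult[OF assms(2,3), of "\<one>\<^bsub>A\<^esub>" "\<one>\<^bsub>A\<^esub>"]
    by (simp add: knitted_pair_beta_unit[OF assms(2,3)])
  then show ?thesis
    using knitted_pair_alpha_closed[OF assms(2,3)] A.l_cancel_one' by fastforce
qed

lemma knitted_pair_beta_one: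
  assumes "group B" "knitted_pair A B \<alpha> \<beta>" "a \<in> carrier A"
  shows "\<beta> \<one>\<^bsub>B\<^esub> a = \<one>\<^bsub>B\<^esub>"
proof -
  interpret B: group B by fact
  have "\<beta> \<one>\<^bsub>B\<^esub> a \<otimes>\<^bsub>B\<^esub> \<beta> \<one>\<^bsub>B\<^esub> a = \<beta> \<one>\<^bsub>B\<^esub> a"
    using knitted_pair_beta_mult[OF assms(2,3), of "\<one>\<^bsub>B\<^esub>" "\<one>\<^bsub>B\<^esub>"]
    by (simp add: knitted_pair_alpha_unit[OF assms(2,3)])
  then show ?thesis
    using knitted_pair_beta_closed[OF assms(2) _ assms(3)] B.r_cancel_one' by fastforce
qed

lemma knit_prod_carrier [simp]: "carrier (knit_prod A B \<alpha> \<beta>) = carrier A \<times> carrier B"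
  by (simp add: knit_prod_def)

lemma knit_prod_mult [simp]:
  "(a1, b1) \<otimes>\<^bsub>knit_prod A B \<alpha> \<beta>\<^esub> (a2, b2) = (a1 \<otimes>\<^bsub>A\<^esub> \<alpha> b1 a2, \<beta> b1 a2 \<otimes>\<^bsub>B\<^esub> b2)"
  by (simp add: knit_prod_def)

lemma knit_prod_one [simp]: "\<one>\<^bsub>knit_prod A B \<alpha> \<beta>\<^esub> = (\<one>\<^bsub>A\<^esub>, \<one>\<^bsub>B\<^esub>)"
  by (simp add: knit_prod_def)

lemma monoid_knit_prod:
  assumes "group A" "group B" and kp: "knitted_pair A B \<alpha> \<beta>"
  shows "monoid (knit_prod A B \<alpha> \<beta>)"
proof -
  interpret A: group A by fact
  interpret B: group B by fact
  note closed = knitted_pair_alpha_closed[OF kp] knitted_pair_beta_closed[OF kp]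
  show ?thesis
  proof (rule monoidI, unfold knit_prod_carrier knit_prod_one)
    fix x y z assume "x \<in> carrier A \<times> carrier B" "y \<in> carrier A \<times> carrier B"
      "z \<in> carrier A \<times> carrier B"
    then obtain a1 b1 a2 b2 a3 b3 where xyz: "x = (a1, b1)" "y = (a2, b2)" "z = (a3, b3)"
      and in_A: "a1 \<in> carrier A" "a2 \<in> carrier A" "a3 \<in> carrier A"
      and in_B: "b1 \<in> carrier B" "b2 \<in> carrier B" "b3 \<in> carrier B"
      by blast
    have "\<alpha> b1 (a2 \<otimes>\<^bsub>A\<^esub> \<alpha> b2 a3) = \<alpha> b1 a2 \<otimes>\<^bsub>A\<^esub> \<alpha> (\<beta> b1 a2 \<otimes>\<^bsub>B\<^esub> b2) a3"
      using in_A in_B closed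
      by (simp add: knitted_pair_alpha_mult[OF kp] knitted_pair_alpha_comp[OF kp])
    moreover have "\<beta> (\<beta> b1 a2 \<otimes>\<^bsub>B\<^esub> b2) a3 = \<beta> b1 (a2 \<otimes>\<^bsub>A\<^esub> \<alpha> b2 a3) \<otimes>\<^bsub>B\<^esub> \<beta> b2 a3"
      using in_A in_B closed
      by (simp add: knitted_pair_beta_mult[OF kp] knitted_pair_beta_comp[OF kp])
    ultimately show "x \<otimes>\<^bsub>knit_prod A B \<alpha> \<beta>\<^esub> y \<otimes>\<^bsub>knit_prod A B \<alpha> \<beta>\<^esub> z
        = x \<otimes>\<^bsub>knit_prod A B \<alpha> \<beta>\<^esub> (y \<otimes>\<^bsub>knit_prod A B \<alpha> \<beta>\<^esub> z)"
      using xyz in_A in_B closed by (simp add: A.m_assoc B.m_assoc)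
  qed (auto simp: closed knitted_pair_alpha_one[OF assms(1) kp]
      knitted_pair_beta_one[OF assms(2) kp] knitted_pair_alpha_unit[OF kp] knitted_pair_beta_unit[OF kp])
qed

lemma knit_prod_homI:
  assumes "monoid G" and kp: "knitted_pair A B \<alpha> \<beta>"
    and F: "F \<in> hom A G" and H: "H \<in> hom B G"
    and exchange: "\<And>a b. a \<in> carrier A \<Longrightarrow> b \<in> carrier B \<Longrightarrow>
      F (\<alpha> b a) \<otimes>\<^bsub>G\<^esub> H (\<beta> b a) = H b \<otimes>\<^bsub>G\<^esub> F a"
  shows "(\<lambda>(a, b). F a \<otimes>\<^bsub>G\<^esub> H b) \<in> hom (knit_prod A B \<alpha> \<beta>) G"
proof -
  interpret G: monoid G by fact
  have F_in: "F a \<in> carrier G" if "a \<in> carrier A" for a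
    using F that by (simp add: hom_in_carrier)
  have H_in: "H b \<in> carrier G" if "b \<in> carrier B" for b
    using H that by (simp add: hom_in_carrier)
  show ?thesis
  proof (rule homI)
    fix x y assume "x \<in> carrier (knit_prod A B \<alpha> \<beta>)" "y \<in> carrier (knit_prod A B \<alpha> \<beta>)"
    then obtain a1 b1 a2 b2 where xy: "x = (a1, b1)" "y = (a2, b2)"
      and in_A: "a1 \<in> carrier A" "a2 \<in> carrier A" and in_B: "b1 \<in> carrier B" "b2 \<in> carrier B"
      by auto
    let ?a = "\<alpha> b1 a2" and ?b = "\<beta> b1 a2"
    have closed: "?a \<in> carrier A" "?b \<in> carrier B"
      using in_A in_B knitted_pair_alpha_closed[OF kp] knitted_pair_beta_closed[OF kp] by auto
    have "F (a1 \<otimes>\<^bsub>A\<^esub> ?a) \<otimes>\<^bsub>G\<^esub> H (?b \<otimes>\<^bsub>B\<^esub> b2) = F a1 \<otimes>\<^bsub>G\<^esub> (F ?a \<otimes>\<^bsub>G\<^esub> H ?b) \<otimes>\<^bsub>G\<^esub> H b2"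
      using in_A in_B closed F H by (simp add: hom_mult F_in H_in G.m_assoc)
    also have "\<dots> = F a1 \<otimes>\<^bsub>G\<^esub> H b1 \<otimes>\<^bsub>G\<^esub> (F a2 \<otimes>\<^bsub>G\<^esub> H b2)"
      using in_A in_B by (simp add: exchange F_in H_in G.m_assoc)
    finally show "(\<lambda>(a, b). F a \<otimes>\<^bsub>G\<^esub> H b) (x \<otimes>\<^bsub>knit_prod A B \<alpha> \<beta>\<^esub> y)
        = (\<lambda>(a, b). F a \<otimes>\<^bsub>G\<^esub> H b) x \<otimes>\<^bsub>G\<^esub> (\<lambda>(a, b). F a \<otimes>\<^bsub>G\<^esub> H b) y"
      using xy by simp
  qed (auto simp: F_in H_in)
qed

theorem theorem2p5:
  fixes A :: "('a, 'm) monoid_scheme" and B :: "('b, 'n) monoid_scheme"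
    and A' :: "('c, 'o) monoid_scheme" and B' :: "('d, 'p) monoid_scheme"
    and \<alpha> :: "'b \<Rightarrow> 'a \<Rightarrow> 'a" and \<beta> :: "'b \<Rightarrow> 'a \<Rightarrow> 'b"
    and \<alpha>' :: "'d \<Rightarrow> 'c \<Rightarrow> 'c" and \<beta>' :: "'d \<Rightarrow> 'c \<Rightarrow> 'd"
    and f :: "'a \<Rightarrow> 'c" and g :: "'b \<Rightarrow> 'd" and \<phi> :: "'b \<Rightarrow> 'c" and \<psi> :: "'a \<Rightarrow> 'd"
  assumes grpA: "group A" and grpB: "group B" and grpA': "group A'" and grpB': "group B'"
    and kp: "knitted_pair A B \<alpha> \<beta>" and kp': "knitted_pair A' B' \<alpha>' \<beta>'"
    and f_map: "f \<in> carrier A \<rightarrow> carrier A'" and g_map: "g \<in> carrier B \<rightarrow> carrier B'"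
    and \<phi>_map: "\<phi> \<in> carrier B \<rightarrow> carrier A'" and \<psi>_map: "\<psi> \<in> carrier A \<rightarrow> carrier B'"
    and cond_f1: "\<And>b1 b2. b1 \<in> carrier B \<Longrightarrow> b2 \<in> carrier B \<Longrightarrow>
        \<phi> (b1 \<otimes>\<^bsub>B\<^esub> b2) = \<phi> b1 \<otimes>\<^bsub>A'\<^esub> \<alpha>' (g b1) (\<phi> b2)"
    and cond_f2: "\<And>a1 a2. a1 \<in> carrier A \<Longrightarrow> a2 \<in> carrier A \<Longrightarrow>
        \<psi> (a1 \<otimes>\<^bsub>A\<^esub> a2) = \<beta>' (\<psi> a1) (f a2) \<otimes>\<^bsub>B'\<^esub> \<psi> a2"
    and cond_h1: "\<And>a b. a \<in> carrier A \<Longrightarrow> b \<in> carrier B \<Longrightarrow>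
        f (\<alpha> b a) \<otimes>\<^bsub>A'\<^esub> \<alpha>' (\<psi> (\<alpha> b a)) (\<phi> (\<beta> b a)) = \<phi> b \<otimes>\<^bsub>A'\<^esub> \<alpha>' (g b) (f a)"
    and cond_h2: "\<And>a b. a \<in> carrier A \<Longrightarrow> b \<in> carrier B \<Longrightarrow>
        \<beta>' (\<psi> (\<alpha> b a)) (\<phi> (\<beta> b a)) \<otimes>\<^bsub>B'\<^esub> g (\<beta> b a) = \<beta>' (g b) (f a) \<otimes>\<^bsub>B'\<^esub> \<psi> a"
  shows
    "((\<forall>a1\<in>carrier A. \<forall>a2\<in>carrier A.
          f (a1 \<otimes>\<^bsub>A\<^esub> a2) = f a1 \<otimes>\<^bsub>A'\<^esub> \<alpha>' (\<psi> a1) (f a2)) \<and>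
      (\<forall>b1\<in>carrier B. \<forall>b2\<in>carrier B.
          g (b1 \<otimes>\<^bsub>B\<^esub> b2) = \<beta>' (g b1) (\<phi> b2) \<otimes>\<^bsub>B'\<^esub> g b2)
      \<longrightarrow> (\<lambda>(a, b). (f a \<otimes>\<^bsub>A'\<^esub> \<alpha>' (\<psi> a) (\<phi> b), \<beta>' (\<psi> a) (\<phi> b) \<otimes>\<^bsub>B'\<^esub> g b))
            \<in> hom (knit_prod A B \<alpha> \<beta>) (knit_prod A' B' \<alpha>' \<beta>'))
     \<and>
     (f \<in> hom A A' \<and> g \<in> hom B B' \<and>
      (\<forall>a1\<in>carrier A. \<forall>a2\<in>carrier A. f a2 = \<alpha>' (\<psi> a1) (f a2)) \<and>
      (\<forall>b1\<in>carrier B. \<forall>b2\<in>carrier B. g b1 = \<beta>' (g b1) (\<phi> b2))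
      \<longrightarrow> (\<lambda>(a, b). (f a \<otimes>\<^bsub>A'\<^esub> \<alpha>' (\<psi> a) (\<phi> b), \<beta>' (\<psi> a) (\<phi> b) \<otimes>\<^bsub>B'\<^esub> g b))
            \<in> hom (knit_prod A B \<alpha> \<beta>) (knit_prod A' B' \<alpha>' \<beta>'))"
proof -
  let ?G' = "knit_prod A' B' \<alpha>' \<beta>'"
  let ?F = "\<lambda>a. (f a, \<psi> a)" and ?H = "\<lambda>b. (\<phi> b, g b)"
  have hom_if_cocycles: "(\<lambda>(a, b). ?F a \<otimes>\<^bsub>?G'\<^esub> ?H b) \<in> hom (knit_prod A B \<alpha> \<beta>) ?G'"
    if f_cocycle: "\<forall>a1\<in>carrier A. \<forall>a2\<in>carrier A. f (a1 \<otimes>\<^bsub>A\<^esub> a2) = f a1 \<otimes>\<^bsub>A'\<^esub> \<alpha>' (\<psi> a1) (f a2)"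
      and g_cocycle: "\<forall>b1\<in>carrier B. \<forall>b2\<in>carrier B. g (b1 \<otimes>\<^bsub>B\<^esub> b2) = \<beta>' (g b1) (\<phi> b2) \<otimes>\<^bsub>B'\<^esub> g b2"
  proof (rule knit_prod_homI[OF monoid_knit_prod[OF grpA' grpB' kp'] kp])
    show "?F \<in> hom A ?G'"
      using f_map \<psi>_map f_cocycle cond_f2 by (auto intro!: homI)
    show "?H \<in> hom B ?G'"
      using g_map \<phi>_map g_cocycle cond_f1 by (auto intro!: homI)
  qed (simp add: cond_h1 cond_h2)
  moreover have "f (a1 \<otimes>\<^bsub>A\<^esub> a2) = f a1 \<otimes>\<^bsub>A'\<^esub> \<alpha>' (\<psi> a1) (f a2)"
    if "f \<in> hom A A'" "\<forall>a1\<in>carrier A. \<forall>a2\<in>carrier A. f a2 = \<alpha>' (\<psi> a1) (f a2)"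
      "a1 \<in> carrier A" "a2 \<in> carrier A" for a1 a2
    using that by (metis hom_mult)
  moreover have "g (b1 \<otimes>\<^bsub>B\<^esub> b2) = \<beta>' (g b1) (\<phi> b2) \<otimes>\<^bsub>B'\<^esub> g b2"
    if "g \<in> hom B B'" "\<forall>b1\<in>carrier B. \<forall>b2\<in>carrier B. g b1 = \<beta>' (g b1) (\<phi> b2)"
      "b1 \<in> carrier B" "b2 \<in> carrier B" for b1 b2
    using that by (metis hom_mult)
  ultimately show ?thesis
    by (simp add: case_prod_beta')
qed

end
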